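(* $\mathfrak{ss}_e=\mathfrak{ss}_l^{\{0\}}$ and $\mathfrak{ss}_e^\perp=(\mathfrak{ss}_l^{\{0\}})^\perp$.
   Context: Let $\mathfrak S_{cc}$ be the set of all sequences $\mathbf a=\langle a_i:i\in\omega\rangle$ of rational numbers with $a_i\to0$ such that $\sum_i a_i$ is conditionally convergent (converges to a real number, with the positive terms summing to $+\infty$ and the negative terms to $-\infty$). Let $[\omega]^\omega_\omega$ be the set of infinite coinfinite subsets of $\omega$; for such $X$ with increasing enumeration $\langle i_n\rangle$, $\sum_X\mathbf a$ denotes $\sum_n a_{i_n}$. For $A\subseteq\mathbb R$: $\mathfrak{ss}_l^A$ is the least cardinality of $\mathcal X\subseteq[\omega]^\omega_\omega$ such that every $\mathbf a\in\mathfrak S_{cc}$ has some $X\in\mathcal X$ for which $\sum_X\mathbf a$ converges to a limit in $A$; $(\mathfrak{ss}_l^A)^\perp$ is the least cardinality of $\mathcal A\subseteq\mathfrak S_{cc}$ such that no $X\in[\omega]^\omega_\omega$ has $\sum_X\mathbf a$ converging to a limit in $A$ for all $\mathbf a\in\mathcal A$. $\mathfrak{ss}_e$ is the least cardinality of $\mathcal X\subseteq[\omega]^\omega_\omega$ such that every $\mathbf a\in\mathfrak S_{cc}$ has some $X\in\mathcal X$ for which $\sum_X\mathbf a$ converges to the same limit as $\sum\mathbf a$; $\mathfrak{ss}_e^\perp$ is the least cardinality of $\mathcal A\subseteq\mathfrak S_{cc}$ such that no $X\in[\omega]^\omega_\omega$ has $\sum_X\mathbf a=\sum\mathbf a$ for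 all $\mathbf a\in\mathcal A$. *)

theory Defs
  imports "HOL-Analysis.Analysis" "HOL-Library.Infinite_Set"
begin

definition S_cc :: "(nat \<Rightarrow> rat) set" where
  "S_cc = {a. (\<lambda>n. real_of_rat (a n)) \<longlonglongrightarrow> 0
            \<and> summable (\<lambda>n. real_of_rat (a n))
            \<and> \<not> summable (\<lambda>n. max 0 (real_of_rat (a n)))
            \<and> \<not> summable (\<lambda>n. min 0 (real_of_rat (a n)))}"

definition inf_coinf :: "nat set set" where
  "inf_coinf = {X. infinite X \<and> infinite (UNIV - X)}"

definition subseq_along :: "(nat \<Rightarrow> rat) \<Rightarrow> nat set \<Rightarrow> nat \<Rightarrow> real" where
  "subseq_along a X = (\<lambda>n. real_of_rat (a (enumerate X n)))"

definition conv_in :: "real set \<Rightarrow> (nat \<Rightarrow> rat) \<Rightarrow> nat set \<Rightarrow> bool" where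
  "conv_in A a X \<longleftrightarrow> (\<exists>s\<in>A. subseq_along a X sums s)"

definition conv_eq :: "(nat \<Rightarrow> rat) \<Rightarrow> nat set \<Rightarrow> bool" where
  "conv_eq a X \<longleftrightarrow> subseq_along a X sums (\<Sum>n. real_of_rat (a n))"

text \<open>Witness families for ss_l^A, (ss_l^A)^perp, ss_e, ss_e^perp.\<close>
definition ssl_family :: "real set \<Rightarrow> nat set set \<Rightarrow> bool" where
  "ssl_family A \<X> \<longleftrightarrow> \<X> \<subseteq> inf_coinf \<and> (\<forall>a\<in>S_cc. \<exists>X\<in>\<X>. conv_in A a X)"

definition ssl_perp_family :: "real set \<Rightarrow> (nat \<Rightarrow> rat) set \<Rightarrow> bool" where
  "ssl_perp_family A \<A> \<longleftrightarrow> \<A> \<subseteq> S_cc \<and> \<not> (\<exists>X\<in>inf_coinf. \<forall>a\<in>\<A>. conv_in A a X)"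

definition sse_family :: "nat set set \<Rightarrow> bool" where
  "sse_family \<X> \<longleftrightarrow> \<X> \<subseteq> inf_coinf \<and> (\<forall>a\<in>S_cc. \<exists>X\<in>\<X>. conv_eq a X)"

definition sse_perp_family :: "(nat \<Rightarrow> rat) set \<Rightarrow> bool" where
  "sse_perp_family \<A> \<longleftrightarrow> \<A> \<subseteq> S_cc \<and> \<not> (\<exists>X\<in>inf_coinf. \<forall>a\<in>\<A>. conv_eq a X)"

text \<open>Two classes of sets have the same least cardinality: every member of
  one class is matched by a member of the other of no larger cardinality.\<close>
definition same_min_card :: "'a set set \<Rightarrow> 'b set set \<Rightarrow> bool" where
  "same_min_card P Q \<longleftrightarrow>
     (\<forall>X\<in>P. \<exists>Y\<in>Q. (card_of Y, card_of X) \<in> ordLeq) \<and>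
     (\<forall>Y\<in>Q. \<exists>X\<in>P. (card_of X, card_of Y) \<in> ordLeq)"

end

theory Submission
  imports Defs
begin

text \<open>Termwise, the subseries along \<open>X\<close> and along its complement add up to the whole
  series. Hence for a convergent series the subseries along \<open>X\<close> has the same sum as the
  series exactly when the subseries along \<open>-X\<close> sums to \<open>0\<close>. Complementation permutes
  the infinite coinfinite sets, so it turns witness families for \<open>ss_e\<close> into witness
  families for \<open>ss_l^{0}\<close> of the same size and back, while the two dual families are
  literally the same.\<close>

lemma sums_enumerate_iff:
  fixes f :: "nat \<Rightarrow> 'a::real_normed_vector"
  assumes "infinite X"
  shows "(\<lambda>i. f (enumerate X i)) sums s \<longleftrightarrow> (\<lambda>n. if n \<in> X then f n else 0) sums s"
  using sums_mono_reindex[of "enumerate X" "\<lambda>n. if n \<in> X then f n else 0"]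
  by (simp add: assms strict_mono_enumerate range_enumerate enumerate_in_set)

lemma sums_restrict_iff_sums_restrict_Compl:
  fixes f :: "nat \<Rightarrow> 'a::real_normed_vector"
  assumes "f sums s"
  shows "(\<lambda>n. if n \<in> X then f n else 0) sums s \<longleftrightarrow> (\<lambda>n. if n \<in> - X then f n else 0) sums 0"
    (is "?g sums s \<longleftrightarrow> ?h sums 0")
proof
  assume "?g sums s"
  from sums_diff[OF assms this] have "(\<lambda>n. f n - ?g n) sums 0" by simp
  also have "(\<lambda>n. f n - ?g n) = ?h" by auto
  finally show "?h sums 0" .
next
  assume "?h sums 0"
  from sums_diff[OF assms this] have "(\<lambda>n. f n - ?h n) sums s" by simp
  also have "(\<lambda>n. f n - ?h n) = ?g" by auto
  finally show "?g sums s" .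
qed

lemma Compl_in_inf_coinf_iff [simp]: "- X \<in> inf_coinf \<longleftrightarrow> X \<in> inf_coinf"
  by (auto simp: inf_coinf_def Compl_eq_Diff_UNIV[symmetric])

lemma conv_eq_iff_conv_in_zero_Compl:
  assumes "summable (\<lambda>n. real_of_rat (a n))" and "X \<in> inf_coinf"
  shows "conv_eq a X \<longleftrightarrow> conv_in {0} a (- X)"
proof -
  have "infinite X" "infinite (- X)"
    using assms(2) by (auto simp: inf_coinf_def Compl_eq_Diff_UNIV)
  have "conv_eq a X \<longleftrightarrow>
      (\<lambda>n. if n \<in> X then real_of_rat (a n) else 0) sums (\<Sum>n. real_of_rat (a n))"
    unfolding conv_eq_def subseq_along_def by (rule sums_enumerate_iff[OF \<open>infinite X\<close>])
  also have "\<dots> \<longleftrightarrow> (\<lambda>n. if n \<in> - X then real_of_rat (a n) else 0) sums 0"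
    by (rule sums_restrict_iff_sums_restrict_Compl[OF summable_sums[OF assms(1)]])
  also have "\<dots> \<longleftrightarrow> conv_in {0} a (- X)"
    using sums_enumerate_iff[OF \<open>infinite (- X)\<close>, of "\<lambda>n. real_of_rat (a n)" 0]
    by (simp add: conv_in_def subseq_along_def)
  finally show ?thesis .
qed

lemma bex_inf_coinf_Compl_iff: "(\<exists>X\<in>inf_coinf. P (- X)) \<longleftrightarrow> (\<exists>X\<in>inf_coinf. P X)"
proof
  assume "\<exists>X\<in>inf_coinf. P X"
  then obtain X where "X \<in> inf_coinf" "P X" by blast
  then show "\<exists>X\<in>inf_coinf. P (- X)" by (intro bexI[of _ "- X"]) simp_all
qed auto

lemma sse_family_iff_ssl_family_zero_Compl: "sse_family F \<longleftrightarrow> ssl_family {0} (uminus ` F)"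
proof (cases "F \<subseteq> inf_coinf")
  case True
  have "conv_eq a X \<longleftrightarrow> conv_in {0} a (- X)" if "a \<in> S_cc" "X \<in> F" for a X
    using that True by (intro conv_eq_iff_conv_in_zero_Compl) (auto simp: S_cc_def)
  moreover have "uminus ` F \<subseteq> inf_coinf"
    using True by (auto simp: image_subset_iff)
  ultimately show ?thesis
    using True unfolding sse_family_def ssl_family_def by (simp cong: ball_cong bex_cong)
next
  case False
  then have "\<not> uminus ` F \<subseteq> inf_coinf"
    by (auto simp: image_subset_iff)
  with False show ?thesis
    unfolding sse_family_def ssl_family_def by simp
qed

lemma sse_perp_family_iff_ssl_perp_family_zero: "sse_perp_family A \<longleftrightarrow> ssl_perp_family {0} A"
proof (cases "A \<subseteq> S_cc")
  case True
  have "conv_eq a X \<longleftrightarrow> conv_in {0} a (- X)" if "a \<in> A" "X \<in> inf_coinf" for a X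
    using that True by (intro conv_eq_iff_conv_in_zero_Compl) (auto simp: S_cc_def)
  then have "(\<exists>X\<in>inf_coinf. \<forall>a\<in>A. conv_eq a X) \<longleftrightarrow> (\<exists>X\<in>inf_coinf. \<forall>a\<in>A. conv_in {0} a (- X))"
    by (simp cong: ball_cong bex_cong)
  also have "\<dots> \<longleftrightarrow> (\<exists>X\<in>inf_coinf. \<forall>a\<in>A. conv_in {0} a X)"
    by (rule bex_inf_coinf_Compl_iff)
  finally show ?thesis
    unfolding sse_perp_family_def ssl_perp_family_def by simp
next
  case False
  then show ?thesis
    unfolding sse_perp_family_def ssl_perp_family_def by simp
qed

lemma same_min_card_if_images:
  assumes "\<And>X. X \<in> P \<Longrightarrow> f ` X \<in> Q" and "\<And>Y. Y \<in> Q \<Longrightarrow> g ` Y \<in> P"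
  shows "same_min_card P Q"
  unfolding same_min_card_def
proof (intro conjI ballI)
  show "\<exists>Y\<in>Q. (card_of Y, card_of X) \<in> ordLeq" if "X \<in> P" for X
    using assms(1)[OF that] card_of_image[of f X] by (rule bexI[rotated])
  show "\<exists>X\<in>P. (card_of X, card_of Y) \<in> ordLeq" if "Y \<in> Q" for Y
    using assms(2)[OF that] card_of_image[of g Y] by (rule bexI[rotated])
qed

theorem mainTheorem8:
  shows "same_min_card (Collect sse_family) (Collect (ssl_family {0}))
       \<and> same_min_card (Collect sse_perp_family) (Collect (ssl_perp_family {0}))"
proof
  show "same_min_card (Collect sse_family) (Collect (ssl_family {0}))"
    by (rule same_min_card_if_images[where f = uminus and g = uminus])
      (simp_all add: sse_family_iff_ssl_family_zero_Compl image_image)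
  show "same_min_card (Collect sse_perp_family) (Collect (ssl_perp_family {0}))"
    by (rule same_min_card_if_images[where f = id and g = id])
      (simp_all add: sse_perp_family_iff_ssl_perp_family_zero)
qed

end
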